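(* Let $q$ be an odd prime power, $f$ a planar function on $\mathbb F_{q^2}$, and $\theta\in\mathbb F_{q^2}^*$ such that for every $c\in\mathbb F_q$, $\#\{x\in\mathbb F_{q^2}:\phi(x)=c\}$ equals $q+1$ if $c\neq0$ and $1$ if $c=0$, where $\phi(x):=\theta_1f_0(x)-\theta_0f_1(x)$. Let $\mathscr C_\theta:=\{C_{a,\beta}:a\in\mathbb F_{q^2},\beta\in\mathbb F_q^*\}$ with $C_{a,\beta}:=\{x\in\mathbb F_{q^2}:\phi(x+a)=\beta\}$. Then $(\mathbb F_{q^2},\mathscr C_\theta)$ is a $(q^2,q+1,q)$-design, i.e.\ every element of $\mathscr C_\theta$ has $q+1$ elements and any two distinct elements of $\mathbb F_{q^2}$ lie in exactly $q$ members of $\mathscr C_\theta$.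
   Context: A function $f:\mathbb F_{q^2}\to\mathbb F_{q^2}$ is planar if for every $a\neq0$ the map $x\mapsto f(x+a)-f(x)$ is a bijection. A fixed $\xi\in\mathbb F_{q^2}\setminus\mathbb F_q$ is chosen; $\theta=\theta_0+\theta_1\xi$ and $f(x)=f_0(x)+f_1(x)\xi$ with $\theta_i\in\mathbb F_q$, $f_i(x)\in\mathbb F_q$. *)

theory Defs
  imports "HOL-Computational_Algebra.Primes" "HOL-Library.Cardinality"
begin

definition prime_power_nat :: "nat \<Rightarrow> bool" where
  "prime_power_nat q \<longleftrightarrow> (\<exists>p k. prime p \<and> k \<ge> 1 \<and> q = p ^ k)"

(* the subfield F_q of a field with q^2 elements: the fixed points of x \<mapsto> x^q *)
definition subfield_q :: "nat \<Rightarrow> 'a::field set" where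
  "subfield_q q = {x. x ^ q = x}"

definition planar :: "('a::field \<Rightarrow> 'a) \<Rightarrow> bool" where
  "planar f \<longleftrightarrow> (\<forall>a. a \<noteq> 0 \<longrightarrow> bij (\<lambda>x. f (x + a) - f x))"

definition block :: "('a::field \<Rightarrow> 'a) \<Rightarrow> 'a \<Rightarrow> 'a \<Rightarrow> 'a set" where
  "block phi a \<beta> = {x. phi (x + a) = \<beta>}"

end

theory Submission
  imports Defs "HOL-Number_Theory.Residues" "HOL-Computational_Algebra.Polynomial"
begin

(* For d \<noteq> 0 the planar difference u \<mapsto> f (u + d) - f u is injective, so its pair of
   F_q-coordinates is injective from F_{q^2} into F_q \<times> F_q, hence bijective by counting. As
   \<phi> (u + d) - \<phi> u = \<theta>1 g0 u - \<theta>0 g1 u is a nonzero linear form in these coordinates, every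
   value of F_q is taken by it exactly q times (this makes the hypothesis \<xi> \<notin> F_q superfluous).
   Two points x, y lie in C_{a,\<beta>} iff u = x + a satisfies \<phi> (u + y - x) = \<phi> u = \<beta>, and the
   sizes q + 1 of the level sets, compared with the sizes q of the difference fibres, force
   distinct u to give distinct blocks; so x and y lie in exactly q blocks. *)

lemma prime_CHAR_finite_field: "prime CHAR('a::{field,finite})"
  by (intro prime_CHAR_semidom finite_imp_CHAR_pos) simp

lemma CHAR_eq_if_card_prime_power:
  assumes "prime p" and "CARD('a::{field,finite}) = p ^ n"
  shows "CHAR('a) = p"
proof -
  have "CHAR('a) dvd p ^ n"
    using CHAR_dvd_CARD[where 'a = 'a] assms(2) by simp
  then have "CHAR('a) dvd p"
    using prime_CHAR_finite_field prime_dvd_power by blast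
  then show ?thesis
    using prime_CHAR_finite_field assms(1) primes_dvd_imp_eq by blast
qed

lemma finite_field_power_card:
  fixes x :: "'a::{field,finite}"
  shows "x ^ CARD('a) = x"
proof (cases "x = 0")
  case True
  then show ?thesis by simp
next
  case False
  let ?U = "UNIV - {0 :: 'a}"
  have "(\<Prod>y\<in>?U. x * y) = \<Prod>?U"
    by (rule prod.reindex_bij_witness[of _ "\<lambda>y. y / x" "\<lambda>y. x * y"]) (use False in auto)
  then have "x ^ card ?U * \<Prod>?U = 1 * \<Prod>?U"
    by (simp add: prod.distrib)
  then have "x ^ (CARD('a) - 1) = 1"
    by (subst (asm) mult_cancel_right) simp
  moreover have "CARD('a) = Suc (CARD('a) - 1)"
    by simp
  ultimately show ?thesis
    by (metis power_Suc mult_1_right)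
qed

lemma card_trinomial_roots_le:
  fixes a c :: "'a::idom"
  assumes "n \<ge> 2"
  shows "card {x. x ^ n + a * x = c} \<le> n"
proof -
  let ?p = "monom 1 n + [:-c, a:]"
  have "degree [:-c, a:] < n"
    using assms by (auto simp: degree_pCons_eq_if)
  then have deg: "degree ?p = n"
    using assms by (subst degree_add_eq_left) (auto simp: degree_monom_eq)
  have "{x. x ^ n + a * x = c} = {x. poly ?p x = 0}"
    by (auto simp: poly_monom algebra_simps)
  also have "card \<dots> \<le> n"
    using card_poly_roots_bound[of ?p] deg assms by fastforce
  finally show ?thesis .
qed

locale subfield_set =
  fixes K :: "'a::field set"
  assumes zero_mem: "0 \<in> K"
    and add_mem: "x \<in> K \<Longrightarrow> y \<in> K \<Longrightarrow> x + y \<in> K"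
    and uminus_mem: "x \<in> K \<Longrightarrow> - x \<in> K"
    and mult_mem: "x \<in> K \<Longrightarrow> y \<in> K \<Longrightarrow> x * y \<in> K"
    and divide_mem: "x \<in> K \<Longrightarrow> y \<in> K \<Longrightarrow> x / y \<in> K"
begin

lemma diff_mem: "x \<in> K \<Longrightarrow> y \<in> K \<Longrightarrow> x - y \<in> K"
  using add_mem[of x "- y"] uminus_mem[of y] by simp

lemma card_line:
  assumes "\<theta>0 \<in> K" "\<theta>1 \<in> K" "\<theta>0 \<noteq> 0 \<or> \<theta>1 \<noteq> 0" "\<gamma> \<in> K"
  shows "card {(a, b) \<in> K \<times> K. \<theta>1 * a - \<theta>0 * b = \<gamma>} = card K"
proof (cases "\<theta>1 = 0")
  case True
  then have "{(a, b) \<in> K \<times> K. \<theta>1 * a - \<theta>0 * b = \<gamma>} = K \<times> {- \<gamma> / \<theta>0}"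
    using assms by (auto simp: field_simps intro: divide_mem uminus_mem)
  then show ?thesis
    by (simp add: card_cartesian_product)
next
  case False
  have "bij_betw (\<lambda>b. ((\<gamma> + \<theta>0 * b) / \<theta>1, b)) K {(a, b) \<in> K \<times> K. \<theta>1 * a - \<theta>0 * b = \<gamma>}"
    by (rule bij_betw_byWitness[where f' = snd])
      (use False assms in \<open>auto simp: field_simps intro!: divide_mem add_mem mult_mem\<close>)
  then show ?thesis
    by (simp add: bij_betw_same_card)
qed

end

lemma subfield_set_subfield_q:
  assumes "prime CHAR('a::field)" and "q = CHAR('a) ^ k" and "odd q"
  shows "subfield_set (subfield_q q :: 'a set)"
proof
  have frobenius_add: "(x + y) ^ q = x ^ q + y ^ q" for x y :: 'a
    by (rule freshmans_dream'[OF assms(1,2)])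
  show "x + y \<in> subfield_q q" if "x \<in> subfield_q q" "y \<in> subfield_q q" for x y :: 'a
    using that by (simp add: subfield_q_def frobenius_add)
  show "- x \<in> subfield_q q" if "x \<in> subfield_q q" for x :: 'a
    using that assms(3) by (simp add: subfield_q_def)
  show "x * y \<in> subfield_q q" if "x \<in> subfield_q q" "y \<in> subfield_q q" for x y :: 'a
    using that by (simp add: subfield_q_def power_mult_distrib)
  show "x / y \<in> subfield_q q" if "x \<in> subfield_q q" "y \<in> subfield_q q" for x y :: 'a
    using that by (simp add: subfield_q_def power_divide)
  show "0 \<in> subfield_q q"
    using assms(3) by (simp add: subfield_q_def zero_power odd_pos)
qed

text \<open>The upper bound counts roots of \<open>x\<^sup>q - x\<close>; the lower bound holds because the trace
  \<open>x + x\<^sup>q\<close> maps the whole field into \<open>subfield_q q\<close> with fibres of size at most \<open>q\<close>.\<close>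

lemma card_subfield_q:
  assumes card: "CARD('a::{field,finite}) = q ^ 2" and q: "q = CHAR('a) ^ k"
  shows "card (subfield_q q :: 'a set) = q"
proof -
  let ?K = "subfield_q q :: 'a set"
  have "card {0, 1 :: 'a} \<le> CARD('a)"
    by (rule card_mono) simp_all
  then have "q \<ge> 2"
    using card by (cases "q < 2") (auto simp: less_2_cases_iff)
  have "?K = {x. x ^ q + (-1) * x = 0}"
    by (auto simp: subfield_q_def)
  then have upper: "card ?K \<le> q"
    using card_trinomial_roots_le[OF \<open>q \<ge> 2\<close>, of "-1" 0] by (simp only:)
  define T where "T x = x + x ^ q" for x :: 'a
  have T_mem: "T x \<in> ?K" for x
    using finite_field_power_card[of x] card
    by (simp add: T_def subfield_q_def freshmans_dream'[OF prime_CHAR_finite_field q]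
        power2_eq_square add.commute flip: power_mult)
  have fibre: "card {x. T x = c} \<le> q" for c
    using card_trinomial_roots_le[OF \<open>q \<ge> 2\<close>, of 1 c] by (simp add: T_def add.commute)
  have "(\<Union>c\<in>?K. {x. T x = c}) = UNIV"
    using T_mem by blast
  then have "q * q = card (\<Union>c\<in>?K. {x. T x = c})"
    using card by (simp add: power2_eq_square)
  also have "\<dots> \<le> (\<Sum>c\<in>?K. card {x. T x = c})"
    by (rule card_UN_le) simp
  also have "\<dots> \<le> card ?K * q"
    using sum_bounded_above[of ?K "\<lambda>c. card {x. T x = c}" q] fibre by simp
  finally show ?thesis
    using upper \<open>q \<ge> 2\<close> by simp
qed

lemma bij_betw_planar_difference_coordinates:
  fixes f f0 f1 :: "'a::{field,finite} \<Rightarrow> 'a"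
  assumes K: "subfield_set K" and card: "CARD('a) = card K ^ 2"
    and dec: "\<And>x. f0 x \<in> K \<and> f1 x \<in> K \<and> f x = f0 x + f1 x * \<xi>"
    and "planar f" and "d \<noteq> 0"
  shows "bij_betw (\<lambda>u. (f0 (u + d) - f0 u, f1 (u + d) - f1 u)) UNIV (K \<times> K)"
proof -
  interpret subfield_set K by (fact K)
  define g where "g u = (f0 (u + d) - f0 u, f1 (u + d) - f1 u)" for u
  have "(\<lambda>(a, b). a + b * \<xi>) \<circ> g = (\<lambda>u. f (u + d) - f u)"
  proof
    fix u
    show "((\<lambda>(a, b). a + b * \<xi>) \<circ> g) u = f (u + d) - f u"
      using dec[of u] dec[of "u + d"] by (simp add: g_def algebra_simps)
  qed
  moreover have "inj (\<lambda>u. f (u + d) - f u)"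
    using \<open>planar f\<close> \<open>d \<noteq> 0\<close> by (simp add: planar_def bij_is_inj)
  ultimately have "inj g"
    using inj_on_imageI2[of "\<lambda>(a, b). a + b * \<xi>" g UNIV] by simp
  moreover have "range g \<subseteq> K \<times> K"
    using dec by (auto simp: g_def intro: diff_mem)
  moreover have "card (range g) = card (K \<times> K)"
    using \<open>inj g\<close> card by (simp add: card_image card_cartesian_product power2_eq_square)
  ultimately show ?thesis
    unfolding g_def[abs_def] by (intro bij_betw_imageI card_subset_eq) simp_all
qed

lemma card_planar_difference_fibre:
  fixes f f0 f1 :: "'a::{field,finite} \<Rightarrow> 'a"
  assumes K: "subfield_set K" and "CARD('a) = card K ^ 2"
    and "\<And>x. f0 x \<in> K \<and> f1 x \<in> K \<and> f x = f0 x + f1 x * \<xi>"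
    and "planar f" and "d \<noteq> 0"
    and \<theta>: "\<theta>0 \<in> K" "\<theta>1 \<in> K" "\<theta>0 \<noteq> 0 \<or> \<theta>1 \<noteq> 0" and "\<gamma> \<in> K"
  defines "\<phi> \<equiv> \<lambda>x. \<theta>1 * f0 x - \<theta>0 * f1 x"
  shows "card {u. \<phi> (u + d) - \<phi> u = \<gamma>} = card K"
proof -
  interpret subfield_set K by (fact K)
  let ?g = "\<lambda>u. (f0 (u + d) - f0 u, f1 (u + d) - f1 u)"
  let ?L = "{(a, b) \<in> K \<times> K. \<theta>1 * a - \<theta>0 * b = \<gamma>}"
  have g: "bij_betw ?g UNIV (K \<times> K)"
    by (rule bij_betw_planar_difference_coordinates[OF assms(1-5)])
  have "\<phi> (u + d) - \<phi> u = \<theta>1 * fst (?g u) - \<theta>0 * snd (?g u)" for u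
    by (simp add: \<phi>_def algebra_simps)
  then have "{u. \<phi> (u + d) - \<phi> u = \<gamma>} = ?g -` ?L"
    using bij_betw_apply[OF g] by auto
  moreover have "card (?g -` ?L) = card ?L"
    using bij_betw_imp_inj_on[OF g] bij_betw_imp_surj_on[OF g]
    by (intro card_vimage_inj) auto
  ultimately show ?thesis
    using card_line[OF \<theta> \<open>\<gamma> \<in> K\<close>] by simp
qed

definition blocks :: "('a::field \<Rightarrow> 'a) \<Rightarrow> 'a set \<Rightarrow> 'a set set" where
  "blocks \<phi> K = {block \<phi> a \<beta> | a \<beta>. \<beta> \<in> K \<and> \<beta> \<noteq> 0}"

locale difference_balanced = subfield_set K for K :: "'a::{field,finite} set" +
  fixes \<phi> :: "'a \<Rightarrow> 'a" and q :: nat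
  assumes phi_mem: "\<phi> x \<in> K"
    and card_level: "c \<in> K \<Longrightarrow> card {x. \<phi> x = c} = (if c \<noteq> 0 then q + 1 else 1)"
    and card_difference: "d \<noteq> 0 \<Longrightarrow> \<gamma> \<in> K \<Longrightarrow> card {u. \<phi> (u + d) - \<phi> u = \<gamma>} = q"
begin

lemma card_block:
  assumes "\<beta> \<in> K" "\<beta> \<noteq> 0"
  shows "card (block \<phi> a \<beta>) = q + 1"
proof -
  have "block \<phi> a \<beta> = (\<lambda>x. x + a) -` {x. \<phi> x = \<beta>}"
    by (auto simp: block_def)
  also have "card \<dots> = card {x. \<phi> x = \<beta>}"
    by (rule card_vimage_inj) (auto simp: inj_def intro: range_eqI[of _ _ "_ - a"])
  finally show ?thesis
    using card_level assms by simp
qed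

text \<open>A shift \<open>e \<noteq> 0\<close> carrying one block onto another would embed a level set of size
  \<open>q + 1\<close> into a difference fibre of size \<open>q\<close>.\<close>

lemma block_eq_imp_eq:
  assumes eq: "block \<phi> a \<beta> = block \<phi> a' \<beta>'" and \<beta>: "\<beta> \<in> K" "\<beta> \<noteq> 0"
  shows "a = a'"
proof (rule ccontr)
  assume "a \<noteq> a'"
  define e where "e = a' - a"
  have shift: "\<phi> (s + e) = \<beta>'" if "\<phi> s = \<beta>" for s
  proof -
    have "s - a \<in> block \<phi> a \<beta>"
      using that by (simp add: block_def)
    then have "s - a \<in> block \<phi> a' \<beta>'"
      by (simp only: eq)
    moreover have "s - a + a' = s + e"
      by (simp add: e_def)
    ultimately show ?thesis
      by (simp add: block_def)
  qed
  have "card {x. \<phi> x = \<beta>} = q + 1"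
    using card_level \<beta> by simp
  then obtain s where "\<phi> s = \<beta>"
    by (metis (mono_tags) Collect_empty_eq card.empty add_is_0 one_neq_zero)
  then have "\<beta>' - \<beta> \<in> K"
    using shift phi_mem \<beta>(1) by (metis diff_mem)
  have "{x. \<phi> x = \<beta>} \<subseteq> {u. \<phi> (u + e) - \<phi> u = \<beta>' - \<beta>}"
    using shift by auto
  then have "card {x. \<phi> x = \<beta>} \<le> card {u. \<phi> (u + e) - \<phi> u = \<beta>' - \<beta>}"
    by (intro card_mono) simp_all
  also have "\<dots> = q"
    using card_difference \<open>a \<noteq> a'\<close> \<open>\<beta>' - \<beta> \<in> K\<close> by (simp add: e_def)
  finally show False
    using \<open>card {x. \<phi> x = \<beta>} = q + 1\<close> by simp
qed

lemma card_blocks_through: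
  assumes "x \<noteq> y"
  shows "card {B \<in> blocks \<phi> K. x \<in> B \<and> y \<in> B} = q"
proof -
  define d where "d = y - x"
  define Z where "Z = {u. \<phi> (u + d) = \<phi> u}"
  have "d \<noteq> 0"
    using assms by (simp add: d_def)
  have phi_nonzero: "\<phi> u \<noteq> 0" if "u \<in> Z" for u
  proof
    assume "\<phi> u = 0"
    then have "{u, u + d} \<subseteq> {x. \<phi> x = 0}"
      using that by (auto simp: Z_def)
    then have "card {u, u + d} \<le> 1"
      using card_mono[of "{x. \<phi> x = 0}"] card_level[OF zero_mem] by simp
    then show False
      using \<open>d \<noteq> 0\<close> by simp
  qed
  have "{B \<in> blocks \<phi> K. x \<in> B \<and> y \<in> B} = (\<lambda>u. block \<phi> (u - x) (\<phi> u)) ` Z"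
  proof (intro equalityI subsetI)
    fix B assume "B \<in> {B \<in> blocks \<phi> K. x \<in> B \<and> y \<in> B}"
    then obtain a \<beta> where B: "B = block \<phi> a \<beta>" and "\<phi> (x + a) = \<beta>" "\<phi> (y + a) = \<beta>"
      by (auto simp: blocks_def block_def)
    moreover have "y + a = x + a + d"
      by (simp add: d_def)
    ultimately have "x + a \<in> Z" and "B = block \<phi> (x + a - x) (\<phi> (x + a))"
      by (simp_all add: Z_def)
    then show "B \<in> (\<lambda>u. block \<phi> (u - x) (\<phi> u)) ` Z"
      by blast
  next
    fix B assume "B \<in> (\<lambda>u. block \<phi> (u - x) (\<phi> u)) ` Z"
    then obtain u where u: "u \<in> Z" and B: "B = block \<phi> (u - x) (\<phi> u)"
      by blast
    have "B \<in> blocks \<phi> K"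
      unfolding B blocks_def using phi_mem phi_nonzero[OF u] by blast
    moreover have "x \<in> B"
      by (simp add: B block_def)
    moreover have "\<phi> (y + (u - x)) = \<phi> u"
      using u by (simp add: Z_def d_def algebra_simps)
    then have "y \<in> B"
      by (simp add: B block_def)
    ultimately show "B \<in> {B \<in> blocks \<phi> K. x \<in> B \<and> y \<in> B}"
      by simp
  qed
  moreover have "inj_on (\<lambda>u. block \<phi> (u - x) (\<phi> u)) Z"
  proof (rule inj_onI)
    fix u v assume "u \<in> Z" "v \<in> Z" "block \<phi> (u - x) (\<phi> u) = block \<phi> (v - x) (\<phi> v)"
    then have "u - x = v - x"
      using block_eq_imp_eq phi_mem phi_nonzero by blast
    then show "u = v"
      by simp
  qed
  ultimately have "card {B \<in> blocks \<phi> K. x \<in> B \<and> y \<in> B} = card Z"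
    by (simp add: card_image)
  also have "\<dots> = q"
    using card_difference[OF \<open>d \<noteq> 0\<close> zero_mem] by (simp add: Z_def)
  finally show ?thesis .
qed

end

theorem corollary3p6:
  fixes q :: nat
    and f f0 f1 :: "'a::{field,finite} \<Rightarrow> 'a"
    and \<theta> \<theta>0 \<theta>1 \<xi> :: 'a
  assumes q_pp: "prime_power_nat q" and q_odd: "odd q"
    and card: "CARD('a) = q ^ 2"
    and xi: "\<xi> \<notin> subfield_q q"
    and f_dec: "\<forall>x. f0 x \<in> subfield_q q \<and> f1 x \<in> subfield_q q \<and> f x = f0 x + f1 x * \<xi>"
    and th_dec: "\<theta>0 \<in> subfield_q q" "\<theta>1 \<in> subfield_q q" "\<theta> = \<theta>0 + \<theta>1 * \<xi>"
    and th_nz: "\<theta> \<noteq> 0"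
    and f_planar: "planar f"
    and level: "\<forall>c \<in> subfield_q q.
        card {x. \<theta>1 * f0 x - \<theta>0 * f1 x = c} = (if c \<noteq> 0 then q + 1 else 1)"
  shows "(\<forall>B \<in> {block (\<lambda>x. \<theta>1 * f0 x - \<theta>0 * f1 x) a \<beta> | a \<beta>.
              \<beta> \<in> subfield_q q \<and> \<beta> \<noteq> 0}. card B = q + 1)
       \<and> (\<forall>x y. x \<noteq> y \<longrightarrow>
            card {B \<in> {block (\<lambda>x. \<theta>1 * f0 x - \<theta>0 * f1 x) a \<beta> | a \<beta>.
                        \<beta> \<in> subfield_q q \<and> \<beta> \<noteq> 0}. x \<in> B \<and> y \<in> B} = q)"
proof -
  obtain p k where "prime p" "q = p ^ k"
    using q_pp unfolding prime_power_nat_def by blast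
  then have q_char: "q = CHAR('a) ^ k"
    using CHAR_eq_if_card_prime_power[where 'a = 'a, of p "k * 2"] card by (simp add: power_mult)
  interpret subfield_set "subfield_q q :: 'a set"
    by (rule subfield_set_subfield_q[OF prime_CHAR_finite_field q_char q_odd])
  have card_K: "card (subfield_q q :: 'a set) = q"
    by (rule card_subfield_q[OF card q_char])
  have \<theta>_nz: "\<theta>0 \<noteq> 0 \<or> \<theta>1 \<noteq> 0"
    using th_nz th_dec(3) by auto
  interpret difference_balanced "subfield_q q" "\<lambda>x. \<theta>1 * f0 x - \<theta>0 * f1 x" q
  proof
    show "\<theta>1 * f0 x - \<theta>0 * f1 x \<in> subfield_q q" for x
      using f_dec th_dec by (intro diff_mem mult_mem) auto
    show "card {x. \<theta>1 * f0 x - \<theta>0 * f1 x = c} = (if c \<noteq> 0 then q + 1 else 1)"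
      if "c \<in> subfield_q q" for c
      using level that by blast
    show "card {u. (\<theta>1 * f0 (u + d) - \<theta>0 * f1 (u + d)) - (\<theta>1 * f0 u - \<theta>0 * f1 u) = \<gamma>} = q"
      if "d \<noteq> 0" "\<gamma> \<in> subfield_q q" for d \<gamma>
      using card_K by (subst card_planar_difference_fibre[OF subfield_set_axioms])
        (use card f_dec f_planar th_dec \<theta>_nz that in auto)
  qed
  show ?thesis
    using card_block card_blocks_through unfolding blocks_def by blast
qed

end
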